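(* Let $m,k\ge1$, $f\in\mathbb{Q}^m\setminus\mathbb{Z}^m$, $r^1,\dots,r^k\in\mathbb{Q}^m\setminus\{0\}$, assume $X=\{(x,s)\in\mathbb{Z}^m\times\mathbb{R}^k_+ : x=f+\sum_j r^js_j\}\neq\emptyset$, and let $P=\{(x,s)\in\mathbb{R}^m\times\mathbb{R}^k_+ : x=f+\sum_j r^js_j\}$. Let $L$ be a rational lattice-free polytope in $\mathbb{R}^m$ containing $f$ in its interior and having rays going into its corners. If the $L$-cut $\sum_{j}\psi(r^j)s_j\ge1$ has finite split rank with respect to $P$, then every face of $L_I$ that is not contained in a facet of $L$ is 2-partitionable.
   Context: Lattice-free: no integer point in the interior. $\psi(r)=\inf\{t>0: r/t\in L-f\}$ (gauge of $L-f$). The boundary point of $r^j$ is the intersection of $\{f+\lambda r^j:\lambda\ge0\}$ with the boundary of $L$; $L$ has rays going into its corners if every vertex of $L$ is the boundary point of some $r^j$. $L_I$ is the convex hull of the integer points of $L$. A split is $(\pi,\pi_0)$ with $\pi\in\mathbb{Z}^m,\pi_0\in\mathbb{Z}$ acting on $x$, with boundary hyperplanes $\{\pi x=\pi_0\}$, $\{\pi x=\pi_0+1\}$. For a polyhedron $Q$, $Q(\pi,\pi_0)=\mathrm{conv}((Q\cap\{\pi x\le\pi_0\})\cup(Q\cap\{\pi x\ge\pi_0+1\}))$; split closure = intersection of all $Q(\pi,\pi_0)$; rank-$t$ split closure defined iteratively (rank 0 is $Q$). Split rank of a valid inequality with respect to $Q$: least $t$ with the inequality valid for the rank-$t$ split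 closure of $Q$, or $+\infty$. A set of points is 2-partitionable if it has at most one element or it can be partitioned into two nonempty sets lying respectively on the two boundary hyperplanes of some split; a polytope is 2-partitionable if its set of integer points is. *)

theory Defs
  imports "HOL-Analysis.Analysis"
begin

definition int_vec :: "real^'m \<Rightarrow> bool" where
  "int_vec v \<longleftrightarrow> (\<forall>i. v $ i \<in> \<int>)"

definition rat_vec :: "real^'m \<Rightarrow> bool" where
  "rat_vec v \<longleftrightarrow> (\<forall>i. v $ i \<in> \<rat>)"

definition lattice_free :: "(real^'m) set \<Rightarrow> bool" where
  "lattice_free L \<longleftrightarrow> (\<forall>z. int_vec z \<longrightarrow> z \<notin> interior L)"

definition rational_polytope :: "(real^'m) set \<Rightarrow> bool" where
  "rational_polytope L \<longleftrightarrow>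
     (\<exists>V. finite V \<and> (\<forall>v\<in>V. rat_vec v) \<and> L = convex hull V)"

definition gauge_psi :: "(real^'m) set \<Rightarrow> real^'m \<Rightarrow> real^'m \<Rightarrow> real" where
  "gauge_psi L f r = Inf {t. t > 0 \<and> (1 / t) *\<^sub>R r \<in> (\<lambda>y. y - f) ` L}"

definition is_boundary_point_of_ray :: "(real^'m) set \<Rightarrow> real^'m \<Rightarrow> real^'m \<Rightarrow> real^'m \<Rightarrow> bool" where
  "is_boundary_point_of_ray L f r v \<longleftrightarrow>
     v \<in> frontier L \<and> (\<exists>c\<ge>0. v = f + c *\<^sub>R r)"

definition rays_into_corners :: "(real^'m) set \<Rightarrow> real^'m \<Rightarrow> ('k \<Rightarrow> real^'m) \<Rightarrow> bool" where
  "rays_into_corners L f r \<longleftrightarrow>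
     (\<forall>v. v extreme_point_of L \<longrightarrow> (\<exists>j. is_boundary_point_of_ray L f (r j) v))"

definition int_hull :: "(real^'m) set \<Rightarrow> (real^'m) set" where
  "int_hull L = convex hull {z \<in> L. int_vec z}"

definition split_set ::
  "((real^'m) \<times> (real^'k)) set \<Rightarrow> real^'m \<Rightarrow> real \<Rightarrow> ((real^'m) \<times> (real^'k)) set" where
  "split_set Q \<pi> \<pi>0 = convex hull ({p \<in> Q. \<pi> \<bullet> fst p \<le> \<pi>0} \<union> {p \<in> Q. \<pi> \<bullet> fst p \<ge> \<pi>0 + 1})"

definition split_closure :: "((real^'m) \<times> (real^'k)) set \<Rightarrow> ((real^'m) \<times> (real^'k)) set" where
  "split_closure Q = (\<Inter>\<pi>\<in>{\<pi>. int_vec \<pi>}. \<Inter>\<pi>0\<in>\<int>. split_set Q \<pi> \<pi>0)"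

definition rank_split_closure :: "nat \<Rightarrow> ((real^'m) \<times> (real^'k)) set \<Rightarrow> ((real^'m) \<times> (real^'k)) set" where
  "rank_split_closure t Q = (split_closure ^^ t) Q"

definition finite_split_rank ::
  "((real^'m) \<times> (real^'k)) set \<Rightarrow> ((real^'m) \<times> (real^'k) \<Rightarrow> bool) \<Rightarrow> bool" where
  "finite_split_rank Q ineq \<longleftrightarrow> (\<exists>t. \<forall>p \<in> rank_split_closure t Q. ineq p)"

definition two_partitionable_set :: "(real^'m) set \<Rightarrow> bool" where
  "two_partitionable_set S \<longleftrightarrow>
     (\<forall>a\<in>S. \<forall>b\<in>S. a = b) \<or>
     (\<exists>\<pi> \<pi>0 A B. int_vec \<pi> \<and> \<pi>0 \<in> \<int> \<and> A \<noteq> {} \<and> B \<noteq> {} \<and>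
        A \<inter> B = {} \<and> A \<union> B = S \<and>
        (\<forall>a\<in>A. \<pi> \<bullet> a = \<pi>0) \<and> (\<forall>b\<in>B. \<pi> \<bullet> b = \<pi>0 + 1))"

definition two_partitionable :: "(real^'m) set \<Rightarrow> bool" where
  "two_partitionable F \<longleftrightarrow> two_partitionable_set {z \<in> F. int_vec z}"

end

theory Submission
  imports Defs
begin

text \<open>Suppose a face \<open>F\<close> of \<open>L\<^sub>I\<close> that lies in no facet of \<open>L\<close> had a set \<open>S\<close> of integer
  points that is not 2-partitionable; then \<open>|S| \<ge> 2\<close> and the barycenter \<open>x\<close> of \<open>S\<close> lies in the
  interior of \<open>L\<close>. Because the rays go into the corners of \<open>L\<close>, every point of \<open>L\<close> lifts to a
  point of \<open>P\<close> with \<open>\<Sum>\<^sub>j \<psi>(r\<^sup>j) s\<^sub>j \<le> 1\<close>, and interior points lift with strict inequality.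
  Let \<open>y\<close> be the barycenter of lifts of the points of \<open>S\<close> and \<open>d = (x, s) - y\<close> for a strict
  lift \<open>(x, s)\<close> of \<open>x\<close>. Since no split places \<open>S\<close> on its two boundary hyperplanes, every
  split disjunction of the pyramid with base the lifts of \<open>S\<close> and apex \<open>y + h d\<close> still contains
  the apex \<open>y + h d / (2|S|)\<close>. Hence the rank-\<open>t\<close> split closure of \<open>P\<close> contains
  \<open>y + (2|S|)\<^sup>-\<^sup>t d\<close>, which violates the L-cut for every \<open>t\<close>.\<close>

definition mean :: "('b \<Rightarrow> 'a::real_vector) \<Rightarrow> 'b set \<Rightarrow> 'a" where
  "mean g A = (1 / real (card A)) *\<^sub>R (\<Sum>x\<in>A. g x)"

lemma mean_in_convex_hull:
  assumes "finite A" "A \<noteq> {}"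
  shows "mean g A \<in> convex hull (g ` A)"
proof -
  have "(\<Sum>x\<in>A. (1 / real (card A)) *\<^sub>R g x) \<in> convex hull (g ` A)"
    using assms by (intro convex_sum) (auto intro: hull_inc)
  then show ?thesis by (simp add: mean_def scaleR_sum_right)
qed

lemma fst_mean: "fst (mean g A) = mean (\<lambda>y. fst (g y)) A"
  by (simp add: mean_def fst_sum)

lemma snd_mean: "snd (mean g A) = mean (\<lambda>y. snd (g y)) A"
  by (simp add: mean_def snd_sum)

lemma mean_remove:
  assumes "finite A" "z \<in> A" "card A \<ge> 2"
  shows "mean g A = (1 / real (card A)) *\<^sub>R g z
           + ((real (card A) - 1) / real (card A)) *\<^sub>R mean g (A - {z})"
proof -
  have "(\<Sum>x\<in>A. g x) = g z + (\<Sum>x\<in>A - {z}. g x)"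
    using assms by (simp add: sum.remove)
  moreover have "((real (card A) - 1) / real (card A)) * (1 / real (card (A - {z}))) = 1 / real (card A)"
    using assms by (simp add: of_nat_diff)
  ultimately show ?thesis by (simp add: mean_def scaleR_add_right)
qed

lemma mean_minus_in_convex_hull:
  assumes "finite A" "z \<in> A" "card A \<ge> 2"
  shows "mean g (A - {z}) \<in> convex hull (g ` A)"
proof -
  have "A - {z} \<noteq> {}"
  proof
    assume "A - {z} = {}"
    then have "A = {z}" using assms(2) by blast
    then show False using assms(3) by simp
  qed
  then have "mean g (A - {z}) \<in> convex hull (g ` (A - {z}))"
    using assms by (intro mean_in_convex_hull) auto
  also have "\<dots> \<subseteq> convex hull (g ` A)" by (intro hull_mono image_mono) auto
  finally show ?thesis .
qed

lemma mean_in_face_imp_subset: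
  assumes G: "G face_of C" and C: "convex C" and A: "finite A" "A \<subseteq> C" "A \<noteq> {}"
    and mG: "mean id A \<in> G"
  shows "A \<subseteq> G"
proof
  fix z assume z: "z \<in> A"
  show "z \<in> G"
  proof (cases "card A \<ge> 2")
    case False
    moreover have "card A > 0" using A by (simp add: card_gt_0_iff)
    ultimately have "card A = 1" by linarith
    then have "A = {z}" using z by (auto simp: card_1_singleton_iff)
    then show ?thesis using mG by (simp add: mean_def)
  next
    case True
    define n where "n = real (card A)"
    define y where "y = mean id (A - {z})"
    have "convex hull A \<subseteq> C" using A(2) C by (rule hull_minimal)
    then have yC: "y \<in> C"
      using mean_minus_in_convex_hull[OF A(1) z True, of id] by (auto simp: y_def)
    have n2: "n \<ge> 2" using True by (simp add: n_def)
    have m: "mean id A = (1 - (n - 1) / n) *\<^sub>R z + ((n - 1) / n) *\<^sub>R y"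
      using mean_remove[OF A(1) z True, of id] n2 by (simp add: n_def y_def field_simps)
    show ?thesis
    proof (cases "z = y")
      case True
      then show ?thesis using m mG by (simp add: algebra_simps)
    next
      case False
      have "mean id A \<in> open_segment z y" unfolding in_segment(2)
        using False n2 m by (intro conjI exI[where x = "(n - 1) / n"]) (auto simp: field_simps)
      then show ?thesis using face_ofD[OF G _ _ yC mG] z A(2) by blast
    qed
  qed
qed

lemma mean_in_interior_of_polyhedron:
  fixes L :: "'a::euclidean_space set"
  assumes L: "polyhedron L" "interior L \<noteq> {}" and A: "finite A" "A \<subseteq> L" "A \<noteq> {}"
    and not_facet: "\<not> (\<exists>G. G facet_of L \<and> A \<subseteq> G)"
  shows "mean id A \<in> interior L"
proof (rule ccontr)
  assume "mean id A \<notin> interior L"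
  moreover have "mean id A \<in> L"
    using mean_in_convex_hull[OF A(1,3), of id] A(2) polyhedron_imp_convex[OF L(1)]
    by (auto dest: hull_minimal)
  ultimately have "mean id A \<in> rel_frontier L"
    using L by (simp add: rel_frontier_def rel_interior_nonempty_interior
        closure_closed polyhedron_imp_closed)
  then obtain G where G: "G facet_of L" "mean id A \<in> G"
    using rel_frontier_of_polyhedron[OF L(1)] by auto
  then have "A \<subseteq> G"
    using mean_in_face_imp_subset[OF facet_of_imp_face_of _ A] polyhedron_imp_convex[OF L(1)]
    by blast
  then show False using not_facet G(1) by blast
qed

lemma int_vec_inner_Ints: "int_vec a \<Longrightarrow> int_vec b \<Longrightarrow> a \<bullet> b \<in> \<int>"
  unfolding int_vec_def inner_vec_def by (auto intro!: Ints_sum Ints_mult)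

lemma Ints_le_or_add_one_le:
  fixes x y :: real
  assumes "x \<in> \<int>" "y \<in> \<int>"
  shows "x \<le> y \<or> y + 1 \<le> x"
proof -
  obtain i j where "x = of_int i" "y = of_int j" using assms by (auto elim!: Ints_cases)
  then show ?thesis by auto
qed

lemma Ints_cases_between:
  fixes x y :: real
  assumes "x \<in> \<int>" "y \<in> \<int>" "y - 1 < x" "x < y + 2"
  shows "x = y \<or> x = y + 1"
proof -
  obtain i j where "x = of_int i" "y = of_int j" using assms(1,2) by (auto elim!: Ints_cases)
  moreover have "j - 1 < i" "i < j + 2"
    using assms(3,4) unfolding \<open>x = of_int i\<close> \<open>y = of_int j\<close> by linarith+
  ultimately show ?thesis by auto
qed

lemma convex_split_set: "convex (split_set Q \<pi> \<pi>0)"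
  by (simp add: split_set_def)

lemma split_set_mono: "Q \<subseteq> Q' \<Longrightarrow> split_set Q \<pi> \<pi>0 \<subseteq> split_set Q' \<pi> \<pi>0"
  unfolding split_set_def by (intro hull_mono) auto

lemma split_closure_mono: "Q \<subseteq> Q' \<Longrightarrow> split_closure Q \<subseteq> split_closure Q'"
  unfolding split_closure_def by (intro INF_mono' split_set_mono)

lemma split_set_outside_strip:
  "p \<in> Q \<Longrightarrow> \<pi> \<bullet> fst p \<le> \<pi>0 \<or> \<pi>0 + 1 \<le> \<pi> \<bullet> fst p \<Longrightarrow> p \<in> split_set Q \<pi> \<pi>0"
  unfolding split_set_def by (auto intro: hull_inc)

lemma integral_point_in_split_set:
  assumes "p \<in> Q" "int_vec (fst p)" "int_vec \<pi>" "\<pi>0 \<in> \<int>"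
  shows "p \<in> split_set Q \<pi> \<pi>0"
  using Ints_le_or_add_one_le int_vec_inner_Ints assms by (blast intro: split_set_outside_strip)

lemma not_two_partitionable_imp_far_point:
  fixes S :: "(real^'m) set"
  assumes S: "finite S" "S \<noteq> {}" "\<forall>z\<in>S. int_vec z" and np: "\<not> two_partitionable_set S"
    and \<pi>: "int_vec \<pi>" "\<pi>0 \<in> \<int>"
    and between: "\<pi>0 < \<pi> \<bullet> mean id S" "\<pi> \<bullet> mean id S < \<pi>0 + 1"
  shows "\<exists>z\<in>S. \<pi> \<bullet> z \<le> \<pi>0 - 1 \<or> \<pi>0 + 2 \<le> \<pi> \<bullet> z"
proof (rule ccontr)
  assume not_far: "\<not> ?thesis"
  have on_boundary: "\<forall>z\<in>S. \<pi> \<bullet> z = \<pi>0 \<or> \<pi> \<bullet> z = \<pi>0 + 1"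
  proof
    fix z assume z: "z \<in> S"
    have "\<pi> \<bullet> z \<in> \<int>" using int_vec_inner_Ints \<pi>(1) S(3) z by blast
    moreover have "\<pi>0 - 1 < \<pi> \<bullet> z" "\<pi> \<bullet> z < \<pi>0 + 2" using not_far z by auto
    ultimately show "\<pi> \<bullet> z = \<pi>0 \<or> \<pi> \<bullet> z = \<pi>0 + 1"
      using Ints_cases_between \<pi>(2) by blast
  qed
  define A where "A = {z \<in> S. \<pi> \<bullet> z = \<pi>0}"
  define B where "B = {z \<in> S. \<pi> \<bullet> z = \<pi>0 + 1}"
  have card: "real (card S) > 0" using S by (simp add: card_gt_0_iff)
  have mean_eq: "\<pi> \<bullet> mean id S = (\<Sum>z\<in>S. \<pi> \<bullet> z) / real (card S)"
    by (simp add: mean_def inner_sum_right)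
  have "A \<noteq> {}"
  proof
    assume "A = {}"
    then have "(\<Sum>z\<in>S. \<pi> \<bullet> z) = (\<Sum>z\<in>S. \<pi>0 + 1)"
      using on_boundary by (intro sum.cong) (auto simp: A_def)
    then have "\<pi> \<bullet> mean id S = \<pi>0 + 1" using card by (simp add: mean_eq)
    then show False using between by simp
  qed
  moreover have "B \<noteq> {}"
  proof
    assume "B = {}"
    then have "(\<Sum>z\<in>S. \<pi> \<bullet> z) = (\<Sum>z\<in>S. \<pi>0)"
      using on_boundary by (intro sum.cong) (auto simp: B_def)
    then have "\<pi> \<bullet> mean id S = \<pi>0" using card by (simp add: mean_eq)
    then show False using between by simp
  qed
  moreover have "A \<inter> B = {}" "A \<union> B = S" using on_boundary by (auto simp: A_def B_def)
  ultimately have "two_partitionable_set S"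
    unfolding two_partitionable_set_def using \<pi>
    by (intro disjI2 exI[of _ \<pi>] exI[of _ \<pi>0] exI[of _ A] exI[of _ B]) (simp add: A_def B_def)
  then show False using np by contradiction
qed

lemma exists_weight_on_split_boundary:
  fixes a t \<pi>0 :: real
  assumes a: "\<pi>0 < a" "a < \<pi>0 + 1" and t: "t \<le> \<pi>0 - 1 \<or> \<pi>0 + 2 \<le> t"
  obtains \<beta> where "1/2 \<le> \<beta>" "\<beta> < 1" "t + \<beta> * (a - t) = \<pi>0 \<or> t + \<beta> * (a - t) = \<pi>0 + 1"
  using t
proof
  assume t: "t \<le> \<pi>0 - 1"
  then have "a - t > 0" using a by simp
  then show ?thesis
    using a t by (intro that[of "(\<pi>0 - t) / (a - t)"]) (simp_all add: field_simps)
next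
  assume t: "\<pi>0 + 2 \<le> t"
  then have "t - a > 0" using a by simp
  then show ?thesis
    using a t by (intro that[of "(t - \<pi>0 - 1) / (t - a)"]) (simp_all add: field_simps)
qed

lemma segment_meets_split_boundary:
  fixes K :: "((real^'m) \<times> (real^'k)) set"
  assumes K: "convex K" "y \<in> K" "q \<in> K"
    and q: "\<pi>0 < \<pi> \<bullet> fst q" "\<pi> \<bullet> fst q < \<pi>0 + 1"
    and y: "\<pi> \<bullet> fst y \<le> \<pi>0 - 1 \<or> \<pi>0 + 2 \<le> \<pi> \<bullet> fst y"
  obtains \<beta> where "1/2 \<le> \<beta>" "\<beta> < 1" "(1 - \<beta>) *\<^sub>R y + \<beta> *\<^sub>R q \<in> split_set K \<pi> \<pi>0"
proof -
  obtain \<beta> where \<beta>: "1/2 \<le> \<beta>" "\<beta> < 1" and boundary: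
      "\<pi> \<bullet> fst y + \<beta> * (\<pi> \<bullet> fst q - \<pi> \<bullet> fst y) \<in> {\<pi>0, \<pi>0 + 1}"
    using exists_weight_on_split_boundary[OF q y] by (metis insert_iff)
  have "(1 - \<beta>) *\<^sub>R y + \<beta> *\<^sub>R q \<in> K" using K \<beta> by (intro convexD) auto
  moreover have "\<pi> \<bullet> fst ((1 - \<beta>) *\<^sub>R y + \<beta> *\<^sub>R q) = \<pi> \<bullet> fst y + \<beta> * (\<pi> \<bullet> fst q - \<pi> \<bullet> fst y)"
    by (simp add: inner_add_right algebra_simps)
  ultimately have "(1 - \<beta>) *\<^sub>R y + \<beta> *\<^sub>R q \<in> split_set K \<pi> \<pi>0"
    using boundary by (intro split_set_outside_strip) auto
  then show ?thesis using \<beta> that by blast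
qed

lemma convex_step_weights:
  fixes n \<beta> :: real
  assumes n: "n \<ge> 2" and \<beta>: "1/2 \<le> \<beta>" "\<beta> < 1"
  shows "0 < 1 / (2 * n * \<beta>)" "1 / (2 * n * \<beta>) < 1"
    "1 / (2 * n * \<beta>) * (1 - \<beta>) \<le> (1 - 1 / (2 * n)) / n"
proof -
  have "1 \<le> \<beta> * n" using mult_mono[of "1/2" \<beta> 2 n] \<beta> n by auto
  then show "0 < 1 / (2 * n * \<beta>)" "1 / (2 * n * \<beta>) < 1" using \<beta> n by (auto simp: field_simps)
  have "1 / (2 * n * \<beta>) * (1 - \<beta>) \<le> 1 / (2 * n)" using \<beta> n by (simp add: field_simps)
  also have "\<dots> \<le> (1 - 1 / (2 * n)) / n"
  proof -
    have "n * 4 \<le> n * (n * 2)" using mult_left_mono[of 4 "n * 2" n] n by auto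
    then show ?thesis using n by (simp add: field_simps)
  qed
  finally show "1 / (2 * n * \<beta>) * (1 - \<beta>) \<le> (1 - 1 / (2 * n)) / n" .
qed

lemma convex_step_toward_apex:
  fixes C :: "'a::real_vector set"
  assumes C: "convex C" "y \<in> C" "\<rho> \<in> C"
    and m: "m = (1 / n) *\<^sub>R y + ((n - 1) / n) *\<^sub>R \<rho>" and n: "n \<ge> 2"
    and w: "(1 - \<beta>) *\<^sub>R y + \<beta> *\<^sub>R (m + h *\<^sub>R d) \<in> C" and \<beta>: "1/2 \<le> \<beta>" "\<beta> < 1"
  shows "m + (h / (2 * n)) *\<^sub>R d \<in> C"
proof -
  text \<open>The target is \<open>\<theta> w + (1 - \<theta>) u\<close> with \<open>\<theta> = 1 / (2 n \<beta>)\<close>, where the point \<open>u\<close>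
    of the segment \<open>[y, \<rho>]\<close> absorbs the remaining weights \<open>a\<close> of \<open>y\<close> and \<open>b\<close> of \<open>\<rho>\<close>.\<close>
  define \<theta> where "\<theta> = 1 / (2 * n * \<beta>)"
  define a where "a = (1 - 1 / (2 * n)) / n - \<theta> * (1 - \<beta>)"
  define b where "b = (1 - 1 / (2 * n)) * (n - 1) / n"
  have \<theta>\<beta>: "\<theta> * \<beta> = 1 / (2 * n)" using \<beta> n by (simp add: \<theta>_def)
  have \<theta>: "0 < \<theta>" "\<theta> < 1" and a: "0 \<le> a"
    using convex_step_weights[OF n \<beta>] by (simp_all add: \<theta>_def a_def)
  have "1 / (2 * n) \<le> 1" using n by simp
  then have b: "0 \<le> b" using n unfolding b_def by (intro divide_nonneg_pos mult_nonneg_nonneg) auto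
  have ab: "a + b = 1 - \<theta>" using n \<beta> by (simp add: a_def b_def \<theta>_def field_simps)
  define u where "u = (a / (1 - \<theta>)) *\<^sub>R y + (b / (1 - \<theta>)) *\<^sub>R \<rho>"
  have u: "u \<in> C" unfolding u_def
    using a b \<theta> ab by (intro convexD[OF C]) (auto simp: add_divide_distrib[symmetric])
  have u_scaled: "(1 - \<theta>) *\<^sub>R u = a *\<^sub>R y + b *\<^sub>R \<rho>"
    using \<theta> by (simp add: u_def scaleR_add_right)
  have \<theta>\<beta>h: "\<theta> * (\<beta> * h) = h / (2 * n)" using \<theta>\<beta> by (simp add: mult.assoc[symmetric])
  have w_scaled: "\<theta> *\<^sub>R ((1 - \<beta>) *\<^sub>R y + \<beta> *\<^sub>R (m + h *\<^sub>R d))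
      = (\<theta> * (1 - \<beta>)) *\<^sub>R y + (1 / (2 * n)) *\<^sub>R m + (h / (2 * n)) *\<^sub>R d"
    by (simp add: scaleR_add_right \<theta>\<beta> \<theta>\<beta>h)
  have "\<theta> *\<^sub>R ((1 - \<beta>) *\<^sub>R y + \<beta> *\<^sub>R (m + h *\<^sub>R d)) + (1 - \<theta>) *\<^sub>R u
      = (\<theta> * (1 - \<beta>) + a + (1 / (2 * n)) * (1 / n)) *\<^sub>R y
        + (b + (1 / (2 * n)) * ((n - 1) / n)) *\<^sub>R \<rho> + (h / (2 * n)) *\<^sub>R d"
    unfolding u_scaled w_scaled by (simp add: m algebra_simps)
  also have "\<dots> = m + (h / (2 * n)) *\<^sub>R d"
  proof -
    have "\<theta> * (1 - \<beta>) + a + (1 / (2 * n)) * (1 / n) = 1 / n"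
      using n by (simp add: a_def field_simps)
    moreover have "b + (1 / (2 * n)) * ((n - 1) / n) = (n - 1) / n"
      using n by (simp add: b_def field_simps)
    ultimately show ?thesis by (simp add: m)
  qed
  finally show ?thesis
    using convexD[OF C(1) w u, of \<theta> "1 - \<theta>"] \<theta> by simp
qed

lemma pyramid_shrink_in_split_set:
  fixes S :: "(real^'m) set" and sg :: "real^'m \<Rightarrow> real^'k" and d :: "(real^'m) \<times> (real^'k)"
  defines "g \<equiv> \<lambda>z. (z, sg z)"
  assumes S: "finite S" "card S \<ge> 2" "\<forall>z\<in>S. int_vec z" and np: "\<not> two_partitionable_set S"
    and d: "fst d = 0" and \<pi>: "int_vec \<pi>" "\<pi>0 \<in> \<int>"
  shows "mean g S + (h / (2 * real (card S))) *\<^sub>R d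
           \<in> split_set (convex hull (g ` S \<union> {mean g S + h *\<^sub>R d})) \<pi> \<pi>0"
proof -
  define n where "n = real (card S)"
  define m where "m = mean g S"
  define K where "K = convex hull (g ` S \<union> {m + h *\<^sub>R d})"
  define D where "D = split_set K \<pi> \<pi>0"
  have n: "n \<ge> 2" using S(2) by (simp add: n_def)
  have D: "convex D" by (simp add: D_def convex_split_set)
  have S_ne: "S \<noteq> {}" using S(2) by auto
  have "g z \<in> D" if "z \<in> S" for z
    unfolding D_def K_def using that S(3) \<pi>
    by (intro integral_point_in_split_set) (auto simp: g_def intro: hull_inc)
  then have hull_D: "convex hull (g ` S) \<subseteq> D"
    by (intro hull_minimal) (auto simp: D_def convex_split_set)
  have apex_K: "m + h *\<^sub>R d \<in> K" unfolding K_def by (intro hull_inc) simp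
  define a where "a = \<pi> \<bullet> mean id S"
  have fst_apex: "\<pi> \<bullet> fst (m + h *\<^sub>R d) = a"
    using d by (simp add: a_def m_def fst_mean g_def id_def)
  have "m + (h / (2 * n)) *\<^sub>R d \<in> D"
  proof (cases "a \<le> \<pi>0 \<or> \<pi>0 + 1 \<le> a")
    case True
    then have "m + h *\<^sub>R d \<in> D"
      unfolding D_def using apex_K fst_apex by (intro split_set_outside_strip) auto
    moreover have "m \<in> D" using mean_in_convex_hull[OF S(1) S_ne] hull_D by (auto simp: m_def)
    ultimately have "(1 - 1 / (2 * n)) *\<^sub>R m + (1 / (2 * n)) *\<^sub>R (m + h *\<^sub>R d) \<in> D"
      using n by (intro convexD[OF D]) auto
    then show ?thesis by (simp add: algebra_simps)
  next
    case False
    then have between: "\<pi>0 < a" "a < \<pi>0 + 1" by auto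
    obtain z where z: "z \<in> S" and far: "\<pi> \<bullet> z \<le> \<pi>0 - 1 \<or> \<pi>0 + 2 \<le> \<pi> \<bullet> z"
      using not_two_partitionable_imp_far_point[OF S(1) S_ne S(3) np \<pi>] between
      by (auto simp: a_def)
    moreover have "g z \<in> K" "\<pi> \<bullet> fst (g z) = \<pi> \<bullet> z"
      using z by (auto simp: K_def g_def intro: hull_inc)
    ultimately obtain \<beta> where \<beta>: "1/2 \<le> \<beta>" "\<beta> < 1"
      and "(1 - \<beta>) *\<^sub>R g z + \<beta> *\<^sub>R (m + h *\<^sub>R d) \<in> D"
      using segment_meets_split_boundary[of K "g z" "m + h *\<^sub>R d" \<pi>0 \<pi>] apex_K fst_apex between
      unfolding D_def K_def by auto
    moreover have "mean g (S - {z}) \<in> D" "g z \<in> D"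
      using mean_minus_in_convex_hull[OF S(1) z S(2)] hull_D z by (auto intro: hull_inc)
    moreover have "m = (1 / n) *\<^sub>R g z + ((n - 1) / n) *\<^sub>R mean g (S - {z})"
      using mean_remove[OF S(1) z S(2)] by (simp add: m_def n_def)
    ultimately show ?thesis using convex_step_toward_apex[OF D _ _ _ n _ \<beta>] by blast
  qed
  then show ?thesis by (simp add: D_def K_def m_def n_def)
qed

lemma pyramid_shrink_in_split_closure:
  fixes S :: "(real^'m) set" and sg :: "real^'m \<Rightarrow> real^'k" and d :: "(real^'m) \<times> (real^'k)"
  defines "g \<equiv> \<lambda>z. (z, sg z)"
  assumes S: "finite S" "card S \<ge> 2" "\<forall>z\<in>S. int_vec z" and np: "\<not> two_partitionable_set S"
    and d: "fst d = 0"
  shows "convex hull (g ` S \<union> {mean g S + (h / (2 * real (card S))) *\<^sub>R d})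
           \<subseteq> split_closure (convex hull (g ` S \<union> {mean g S + h *\<^sub>R d}))"
  unfolding split_closure_def
proof (intro INT_greatest hull_minimal)
  fix \<pi> :: "real^'m" and \<pi>0 :: real assume \<pi>: "\<pi> \<in> {\<pi>. int_vec \<pi>}" "\<pi>0 \<in> \<int>"
  let ?D = "split_set (convex hull (g ` S \<union> {mean g S + h *\<^sub>R d})) \<pi> \<pi>0"
  have "g z \<in> ?D" if "z \<in> S" for z
    using that S(3) \<pi> by (intro integral_point_in_split_set) (auto simp: g_def intro: hull_inc)
  moreover have "mean g S + (h / (2 * real (card S))) *\<^sub>R d \<in> ?D"
    using pyramid_shrink_in_split_set[OF S np d] \<pi> by (simp add: g_def)
  ultimately show "g ` S \<union> {mean g S + (h / (2 * real (card S))) *\<^sub>R d} \<subseteq> ?D" by auto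
  show "convex ?D" by (rule convex_split_set)
qed

lemma pyramid_in_rank_split_closure:
  fixes S :: "(real^'m) set" and sg :: "real^'m \<Rightarrow> real^'k" and p :: "(real^'m) \<times> (real^'k)"
  defines "g \<equiv> \<lambda>z. (z, sg z)"
  assumes S: "finite S" "card S \<ge> 2" "\<forall>z\<in>S. int_vec z" and np: "\<not> two_partitionable_set S"
    and Q: "convex Q" "g ` S \<subseteq> Q" "p \<in> Q" and p: "fst p = mean id S"
  shows "mean g S + (1 / (2 * real (card S))) ^ t *\<^sub>R (p - mean g S) \<in> rank_split_closure t Q"
proof -
  define c where "c = 1 / (2 * real (card S))"
  define K where "K h = convex hull (g ` S \<union> {mean g S + h *\<^sub>R (p - mean g S)})" for h
  have d: "fst (p - mean g S) = 0" using p by (simp add: g_def fst_mean id_def)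
  have "K (c ^ t) \<subseteq> rank_split_closure t Q"
  proof (induction t)
    case 0
    have "K 1 \<subseteq> Q" unfolding K_def using Q by (intro hull_minimal) auto
    then show ?case by (simp add: rank_split_closure_def)
  next
    case (Suc t)
    have "K (c ^ Suc t) = K (c ^ t / (2 * real (card S)))" by (simp add: c_def)
    also have "\<dots> \<subseteq> split_closure (K (c ^ t))"
      unfolding K_def g_def by (rule pyramid_shrink_in_split_closure[OF S np d[unfolded g_def]])
    also have "\<dots> \<subseteq> split_closure (rank_split_closure t Q)"
      by (rule split_closure_mono[OF Suc.IH])
    finally show ?case by (simp add: rank_split_closure_def)
  qed
  moreover have "mean g S + (c ^ t) *\<^sub>R (p - mean g S) \<in> K (c ^ t)"
    unfolding K_def by (intro hull_inc) simp
  ultimately show ?thesis by (auto simp: c_def)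
qed

lemma not_two_partitionable_imp_infinite_split_rank:
  fixes S :: "(real^'m) set" and Q :: "((real^'m) \<times> (real^'k)) set" and \<phi> :: "real^'k \<Rightarrow> real"
  assumes S: "finite S" "card S \<ge> 2" "\<forall>z\<in>S. int_vec z" and np: "\<not> two_partitionable_set S"
    and Q: "convex Q" and \<phi>: "linear \<phi>"
    and lift_S: "\<forall>z\<in>S. \<exists>s. (z, s) \<in> Q \<and> \<phi> s \<le> 1"
    and lift_mean: "(mean id S, s\<^sub>0) \<in> Q" "\<phi> s\<^sub>0 < 1"
  shows "\<not> finite_split_rank Q (\<lambda>(x, s). \<phi> s \<ge> 1)"
proof
  assume "finite_split_rank Q (\<lambda>(x, s). \<phi> s \<ge> 1)"
  then obtain t where t: "\<forall>q \<in> rank_split_closure t Q. (\<lambda>(x, s). \<phi> s \<ge> 1) q"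
    unfolding finite_split_rank_def by blast
  obtain sg where sg: "\<forall>z\<in>S. (z, sg z) \<in> Q \<and> \<phi> (sg z) \<le> 1" using lift_S by metis
  define g where "g z = (z, sg z)" for z
  define \<mu> where "\<mu> = (1 / (2 * real (card S))) ^ t"
  define q where "q = mean g S + \<mu> *\<^sub>R ((mean id S, s\<^sub>0) - mean g S)"
  have \<mu>: "0 < \<mu>" "\<mu> \<le> 1" using S(2) by (auto simp: \<mu>_def power_le_one)
  have "q \<in> rank_split_closure t Q"
    unfolding q_def \<mu>_def g_def
    by (rule pyramid_in_rank_split_closure[OF S np Q]) (use sg lift_mean in auto)
  then have "\<phi> (snd q) \<ge> 1" using t by (cases q) auto
  moreover have "\<phi> (mean sg S) \<le> 1"
  proof -
    have "\<phi> (mean sg S) = mean (\<lambda>z. \<phi> (sg z)) S"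
      by (simp add: mean_def linear_scale[OF \<phi>] linear_sum[OF \<phi>])
    also have "\<dots> \<le> mean (\<lambda>z. 1) S"
      unfolding mean_def real_scaleR_def using sg by (intro mult_left_mono sum_mono) auto
    also have "\<dots> = 1" using S(2) by (simp add: mean_def)
    finally show ?thesis .
  qed
  moreover have "snd q = (1 - \<mu>) *\<^sub>R mean sg S + \<mu> *\<^sub>R s\<^sub>0"
    by (simp add: q_def snd_mean g_def algebra_simps)
  then have "\<phi> (snd q) = (1 - \<mu>) * \<phi> (mean sg S) + \<mu> * \<phi> s\<^sub>0"
    by (simp add: linear_add[OF \<phi>] linear_scale[OF \<phi>])
  moreover have "(1 - \<mu>) * \<phi> (mean sg S) \<le> 1 - \<mu>"
    using \<mu> \<open>\<phi> (mean sg S) \<le> 1\<close> mult_left_mono[of "\<phi> (mean sg S)" 1 "1 - \<mu>"] by simp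
  moreover have "\<mu> * \<phi> s\<^sub>0 < \<mu>" using \<mu> lift_mean(2) by simp
  ultimately show False by linarith
qed

lemma linear_weighted_sum: "linear (\<lambda>s::real^'k::finite. \<Sum>j\<in>UNIV. \<psi> j * s $ j)"
  by (intro linearI) (simp_all add: algebra_simps sum.distrib sum_distrib_left)

lemma convex_ray_lifts:
  fixes f :: "'a::real_vector" and r :: "'k::finite \<Rightarrow> 'a" and \<phi> :: "real^'k \<Rightarrow> real"
  assumes \<phi>: "linear \<phi>"
  shows "convex {(x, s). (\<forall>j. 0 \<le> s $ j) \<and> x = f + (\<Sum>j\<in>UNIV. s $ j *\<^sub>R r j) \<and> \<phi> s \<le> c}"
proof (rule convexI)
  let ?R = "\<lambda>s::real^'k. \<Sum>j\<in>UNIV. s $ j *\<^sub>R r j"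
  fix p q :: "'a \<times> (real^'k)" and u v :: real
  assume p: "p \<in> {(x, s). (\<forall>j. 0 \<le> s $ j) \<and> x = f + ?R s \<and> \<phi> s \<le> c}"
    and q: "q \<in> {(x, s). (\<forall>j. 0 \<le> s $ j) \<and> x = f + ?R s \<and> \<phi> s \<le> c}"
    and uv: "0 \<le> u" "0 \<le> v" "u + v = 1"
  obtain s1 where 1: "p = (f + ?R s1, s1)" "\<forall>j. 0 \<le> s1 $ j" "\<phi> s1 \<le> c" using p by auto
  obtain s2 where 2: "q = (f + ?R s2, s2)" "\<forall>j. 0 \<le> s2 $ j" "\<phi> s2 \<le> c" using q by auto
  have "u *\<^sub>R (f + ?R s1) + v *\<^sub>R (f + ?R s2) = (u + v) *\<^sub>R f + ?R (u *\<^sub>R s1 + v *\<^sub>R s2)"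
    by (simp add: algebra_simps sum.distrib scaleR_sum_right)
  moreover have "\<phi> (u *\<^sub>R s1 + v *\<^sub>R s2) \<le> u * c + v * c"
    using 1 2 uv by (simp add: linear_add[OF \<phi>] linear_scale[OF \<phi>] add_mono mult_left_mono)
  ultimately show "u *\<^sub>R p + v *\<^sub>R q \<in> {(x, s). (\<forall>j. 0 \<le> s $ j) \<and> x = f + ?R s \<and> \<phi> s \<le> c}"
    using 1 2 uv by (simp add: distrib_right[symmetric])
qed

lemma gauge_psi_le_inverse:
  assumes "0 < c" "f + c *\<^sub>R r \<in> L"
  shows "gauge_psi L f r \<le> 1 / c"
  unfolding gauge_psi_def
proof (rule cInf_lower)
  show "1 / c \<in> {t. 0 < t \<and> (1 / t) *\<^sub>R r \<in> (\<lambda>y. y - f) ` L}"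
    using assms by (auto intro!: image_eqI[where x = "f + c *\<^sub>R r"])
  show "bdd_below {t. 0 < t \<and> (1 / t) *\<^sub>R r \<in> (\<lambda>y. y - f) ` L}"
    by (rule bdd_belowI[where m = 0]) auto
qed

lemma rays_into_corners_lift_le:
  fixes f :: "real^'m" and r :: "'k::finite \<Rightarrow> real^'m"
  assumes L: "compact L" "convex L" and corners: "rays_into_corners L f r" and x: "x \<in> L"
  shows "\<exists>s. (\<forall>j. 0 \<le> s $ j) \<and> x = f + (\<Sum>j\<in>UNIV. s $ j *\<^sub>R r j)
           \<and> (\<Sum>j\<in>UNIV. gauge_psi L f (r j) * s $ j) \<le> 1"
proof -
  define \<phi> where "\<phi> s = (\<Sum>j\<in>UNIV. gauge_psi L f (r j) * s $ j)" for s :: "real^'k"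
  define M where "M = fst ` {(x, s). (\<forall>j. 0 \<le> s $ j) \<and> x = f + (\<Sum>j\<in>UNIV. s $ j *\<^sub>R r j) \<and> \<phi> s \<le> 1}"
  have "convex M"
    unfolding M_def \<phi>_def by (intro convex_linear_image linear_fst convex_ray_lifts linear_weighted_sum)
  moreover have "v \<in> M" if v: "v extreme_point_of L" for v
  proof -
    obtain j c where "v \<in> frontier L" and c: "c \<ge> 0" and v_ray: "v = f + c *\<^sub>R r j"
      using corners v unfolding rays_into_corners_def is_boundary_point_of_ray_def by blast
    then have "v \<in> L" using L frontier_subset_closed compact_imp_closed by blast
    have weight: "gauge_psi L f (r j) * c \<le> 1"
    proof (cases "c = 0")
      case False
      then have "gauge_psi L f (r j) \<le> 1 / c"
        using c \<open>v \<in> L\<close> v_ray by (intro gauge_psi_le_inverse) auto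
      then show ?thesis using c False by (simp add: field_simps)
    qed simp
    define s :: "real^'k" where "s = (\<chi> i. if i = j then c else 0)"
    have "(\<Sum>i\<in>UNIV. s $ i *\<^sub>R r i) = (\<Sum>i\<in>UNIV. if i = j then c *\<^sub>R r j else 0)"
      by (rule sum.cong) (auto simp: s_def)
    then have "(\<Sum>i\<in>UNIV. s $ i *\<^sub>R r i) = c *\<^sub>R r j" by simp
    moreover have "\<phi> s = gauge_psi L f (r j) * c"
      by (simp add: \<phi>_def s_def if_distrib cong: if_cong)
    moreover have "\<forall>i. 0 \<le> s $ i" using c by (simp add: s_def)
    ultimately have "(v, s) \<in> {(x, s). (\<forall>j. 0 \<le> s $ j) \<and> x = f + (\<Sum>j\<in>UNIV. s $ j *\<^sub>R r j) \<and> \<phi> s \<le> 1}"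
      using v_ray weight by simp
    then show ?thesis unfolding M_def by (rule image_eqI[rotated]) simp
  qed
  ultimately have "convex hull {v. v extreme_point_of L} \<subseteq> M" by (intro hull_minimal) auto
  then have "x \<in> M" using Krein_Milman_Minkowski[OF L] x by blast
  then show ?thesis by (auto simp: M_def \<phi>_def)
qed

lemma rays_into_corners_lift_less:
  fixes f :: "real^'m" and r :: "'k::finite \<Rightarrow> real^'m"
  assumes L: "compact L" "convex L" and corners: "rays_into_corners L f r" and x: "x \<in> interior L"
  shows "\<exists>s. (\<forall>j. 0 \<le> s $ j) \<and> x = f + (\<Sum>j\<in>UNIV. s $ j *\<^sub>R r j)
           \<and> (\<Sum>j\<in>UNIV. gauge_psi L f (r j) * s $ j) < 1"
proof -
  text \<open>Push \<open>x\<close> slightly away from \<open>f\<close>, lift that point, and scale the lift back.\<close>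
  obtain e where e: "e > 0" "ball x e \<subseteq> L" using x by (meson mem_interior)
  define \<delta> where "\<delta> = e / (2 * (norm (x - f) + 1))"
  have \<delta>: "\<delta> > 0" unfolding \<delta>_def using e by (intro divide_pos_pos) (auto intro: add_nonneg_pos)
  have "norm (\<delta> *\<^sub>R (x - f)) = e * (norm (x - f) / (2 * (norm (x - f) + 1)))"
    using \<delta> e by (simp add: \<delta>_def)
  also have "\<dots> < e" using e by (simp add: field_simps add_pos_nonneg)
  finally have "x + \<delta> *\<^sub>R (x - f) \<in> L" using e by (auto simp: dist_norm)
  then obtain s where s: "\<forall>j. 0 \<le> s $ j" "x + \<delta> *\<^sub>R (x - f) = f + (\<Sum>j\<in>UNIV. s $ j *\<^sub>R r j)"
      "(\<Sum>j\<in>UNIV. gauge_psi L f (r j) * s $ j) \<le> 1"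
    using rays_into_corners_lift_le[OF L corners] by blast
  define s' where "s' = (1 / (1 + \<delta>)) *\<^sub>R s"
  have "(1 + \<delta>) *\<^sub>R (x - f) = (\<Sum>j\<in>UNIV. s $ j *\<^sub>R r j)"
    using s(2) by (simp add: algebra_simps)
  then have "(\<Sum>j\<in>UNIV. s' $ j *\<^sub>R r j) = (1 / (1 + \<delta>)) *\<^sub>R ((1 + \<delta>) *\<^sub>R (x - f))"
    by (simp add: s'_def scaleR_sum_right)
  then have x_eq: "x = f + (\<Sum>j\<in>UNIV. s' $ j *\<^sub>R r j)" using \<delta> by simp
  have "(\<Sum>j\<in>UNIV. gauge_psi L f (r j) * s' $ j)
      = (\<Sum>j\<in>UNIV. gauge_psi L f (r j) * s $ j) / (1 + \<delta>)"
    by (simp add: s'_def sum_divide_distrib)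
  also have "\<dots> \<le> 1 / (1 + \<delta>)" using s(3) \<delta> by (intro divide_right_mono) auto
  also have "\<dots> < 1" using \<delta> by simp
  finally have "(\<Sum>j\<in>UNIV. gauge_psi L f (r j) * s' $ j) < 1" .
  moreover have "\<forall>j. 0 \<le> s' $ j" using s(1) \<delta> by (simp add: s'_def)
  ultimately show ?thesis using x_eq by blast
qed

lemma finite_int_vec_points:
  fixes L :: "(real^'m) set"
  assumes "bounded L"
  shows "finite {z \<in> L. int_vec z}"
proof -
  obtain B where B: "\<forall>x\<in>L. norm x \<le> B" using assms bounded_iff by blast
  define A where "A = {k \<in> \<int>. \<bar>k\<bar> \<le> B}"
  have "finite A" unfolding A_def by (rule finite_abs_int_segment)
  moreover have "{z \<in> L. int_vec z} \<subseteq> vec_lambda ` (PiE UNIV (\<lambda>_. A))"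
  proof
    fix z assume z: "z \<in> {z \<in> L. int_vec z}"
    have "(\<lambda>i. z $ i) \<in> PiE UNIV (\<lambda>_. A)"
      using z B component_le_norm_cart[of z] unfolding A_def int_vec_def
      by (auto intro: order_trans)
    then show "z \<in> vec_lambda ` (PiE UNIV (\<lambda>_. A))" by (metis image_eqI vec_lambda_eta)
  qed
  ultimately show ?thesis by (auto intro: finite_subset simp: finite_PiE)
qed

lemma face_of_convex_hull_finite_eq:
  fixes T :: "'a::euclidean_space set"
  assumes "finite T" "F face_of convex hull T"
  shows "F = convex hull (F \<inter> T)"
proof -
  obtain T' where T': "T' \<subseteq> T" "F = convex hull T'"
    using face_of_convex_hull_subset[OF finite_imp_compact] assms by metis
  then have "T' \<subseteq> F \<inter> T" using hull_subset[of T' convex] by auto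
  then have "F \<subseteq> convex hull (F \<inter> T)" using T' hull_mono by blast
  moreover have "convex hull (F \<inter> T) \<subseteq> F"
    using assms(2) by (intro hull_minimal) (auto dest: face_of_imp_convex)
  ultimately show ?thesis by blast
qed

lemma not_two_partitionable_set_card:
  assumes "finite S" "\<not> two_partitionable_set S"
  shows "card S \<ge> 2"
proof -
  obtain a b where "a \<in> S" "b \<in> S" "a \<noteq> b"
    using assms(2) unfolding two_partitionable_set_def by blast
  then have "card {a, b} \<le> card S" using assms(1) by (intro card_mono) auto
  then show ?thesis using \<open>a \<noteq> b\<close> by simp
qed

lemma rational_polytope_imp_polytope: "rational_polytope L \<Longrightarrow> polytope L"
  unfolding rational_polytope_def polytope_def by blast

lemma face_of_int_hull_integral_points:
  fixes L :: "(real^'m) set"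
  assumes L: "bounded L" "convex L" and F: "F face_of int_hull L"
  shows "F = convex hull {z \<in> F. int_vec z}" "finite {z \<in> F. int_vec z}" "{z \<in> F. int_vec z} \<subseteq> L"
proof -
  define T where "T = {z \<in> L. int_vec z}"
  have T: "finite T" unfolding T_def using L(1) by (rule finite_int_vec_points)
  have "F \<subseteq> L"
    using face_of_imp_subset[OF F] hull_minimal[of T L] L(2) by (auto simp: int_hull_def T_def)
  then have S_eq: "{z \<in> F. int_vec z} = F \<inter> T" by (auto simp: T_def)
  show "F = convex hull {z \<in> F. int_vec z}"
    unfolding S_eq using face_of_convex_hull_finite_eq[OF T] F by (simp add: int_hull_def T_def)
  show "finite {z \<in> F. int_vec z}" "{z \<in> F. int_vec z} \<subseteq> L"
    using S_eq T \<open>F \<subseteq> L\<close> by auto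
qed

theorem theorem2:
  fixes f :: "real^'m"
    and r :: "'k::finite \<Rightarrow> real^'m"
    and L :: "(real^'m) set"
  assumes f_rat: "rat_vec f"
    and f_nonint: "\<not> int_vec f"
    and r_rat: "\<forall>j. rat_vec (r j)"
    and r_nz: "\<forall>j. r j \<noteq> 0"
    and X_ne: "{(x, s). int_vec x \<and> (\<forall>j. s $ j \<ge> 0) \<and> x = f + (\<Sum>j\<in>UNIV. s $ j *\<^sub>R r j)} \<noteq> {}"
    and P_def: "P = {(x, s). (\<forall>j. s $ j \<ge> (0::real)) \<and> x = f + (\<Sum>j\<in>UNIV. s $ j *\<^sub>R r j)}"
    and L_poly: "rational_polytope L"
    and L_free: "lattice_free L"
    and f_int: "f \<in> interior L"
    and corners: "rays_into_corners L f r"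
    and rank: "finite_split_rank P (\<lambda>(x, s). (\<Sum>j\<in>UNIV. gauge_psi L f (r j) * s $ j) \<ge> 1)"
  shows "\<forall>F. F face_of int_hull L \<and> \<not> (\<exists>G. G facet_of L \<and> F \<subseteq> G) \<longrightarrow> two_partitionable F"
proof (intro allI impI, elim conjE)
  fix F assume F: "F face_of int_hull L" and not_facet: "\<not> (\<exists>G. G facet_of L \<and> F \<subseteq> G)"
  have L: "compact L" "convex L" "polyhedron L"
    using rational_polytope_imp_polytope[OF L_poly]
    by (auto intro: polytope_imp_compact polytope_imp_convex polytope_imp_polyhedron)
  define S where "S = {z \<in> F. int_vec z}"
  note S = face_of_int_hull_integral_points[OF compact_imp_bounded[OF L(1)] L(2) F, folded S_def]
  show "two_partitionable F"
  proof (rule ccontr)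
    assume "\<not> two_partitionable F"
    then have np: "\<not> two_partitionable_set S" by (simp add: two_partitionable_def S_def)
    have card: "card S \<ge> 2" by (rule not_two_partitionable_set_card[OF S(2) np])
    have "\<not> (\<exists>G. G facet_of L \<and> S \<subseteq> G)"
      using not_facet S(1) by (metis facet_of_imp_face_of face_of_imp_convex hull_minimal)
    moreover have "interior L \<noteq> {}" "S \<noteq> {}" using f_int card by auto
    ultimately have "mean id S \<in> interior L"
      using mean_in_interior_of_polyhedron[OF L(3) _ S(2,3)] by blast
    then obtain s\<^sub>0 where lift_mean: "(mean id S, s\<^sub>0) \<in> P"
        "(\<Sum>j\<in>UNIV. gauge_psi L f (r j) * s\<^sub>0 $ j) < 1"
      using rays_into_corners_lift_less[OF L(1,2) corners] by (auto simp: P_def)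
    have lift_S: "\<forall>z\<in>S. \<exists>s. (z, s) \<in> P \<and> (\<Sum>j\<in>UNIV. gauge_psi L f (r j) * s $ j) \<le> 1"
      using rays_into_corners_lift_le[OF L(1,2) corners] S(3) by (auto simp: P_def)
    have "\<forall>z\<in>S. int_vec z" by (simp add: S_def)
    moreover have "convex P" using convex_ray_lifts[OF linear_zero, of f r 0] by (simp add: P_def)
    ultimately have "\<not> finite_split_rank P (\<lambda>(x, s). (\<Sum>j\<in>UNIV. gauge_psi L f (r j) * s $ j) \<ge> 1)"
      by (rule not_two_partitionable_imp_infinite_split_rank[OF S(2) card _ np _
            linear_weighted_sum lift_S lift_mean])
    then show False using rank by contradiction
  qed
qed

end
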